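(* Let $n\ge 2$ and $j\ge 1$ be integers. There are $n$ Bernoulli arms whose means are i.i.d. uniform on $(0,1)$; given the means, each arm has i.i.d. Bernoulli observations with success probability equal to its mean, independent across arms. For each arm $i$ let $s_i$ be its number of successes among its first $j$ observations. Let $N^*$ be the number of arms $i$, other than the arm with the largest mean, such that $s_i=0$ and $\max_{l\ne i}s_l=j$. Let $U$ be uniform on $(0,1)$ and $W=U^{1/n}$. Then $\mathbb{E}[N^*]=(n-1)D$, where $$D=\mathbb{E}\Big[\frac{1-(1-W)^{j+1}}{(j+1)W}\Big(1-(1-W^j)\Big(1-\frac{W^j}{j+1}\Big)^{n-2}\Big)\Big].$$
   Context: $N^*$ is the number of non-best arms eliminated by early elimination with parameter $j$ (an arm is eliminated after round $j$ if it had all failures in its first $j$ observations while another arm had all successes). *)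

theory Defs
  imports "HOL-Probability.Probability"
begin

text \<open>Outcome of one arm: (its mean, its first j observations as a Boolean sequence;
only indices below j are relevant).\<close>

definition obs_space :: "nat \<Rightarrow> (nat \<Rightarrow> bool) measure" where
  "obs_space j = PiM {..<j} (\<lambda>_. count_space UNIV)"

definition bern_obs :: "nat \<Rightarrow> real \<Rightarrow> (nat \<Rightarrow> bool) measure" where
  "bern_obs j p = PiM {..<j} (\<lambda>_. measure_pmf (bernoulli_pmf p))"

definition arm_law :: "nat \<Rightarrow> (real \<times> (nat \<Rightarrow> bool)) measure" where
  "arm_law j = uniform_measure lborel {0<..<1::real} \<bind>
     (\<lambda>p. distr (bern_obs j p) (borel \<Otimes>\<^sub>M obs_space j) (\<lambda>x. (p, x)))"

definition bandit_law :: "nat \<Rightarrow> nat \<Rightarrow> (nat \<Rightarrow> real \<times> (nat \<Rightarrow> bool)) measure" where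
  "bandit_law n j = PiM {..<n} (\<lambda>_. arm_law j)"

definition succ :: "nat \<Rightarrow> (nat \<Rightarrow> real \<times> (nat \<Rightarrow> bool)) \<Rightarrow> nat \<Rightarrow> nat" where
  "succ j \<omega> i = card {k \<in> {..<j}. snd (\<omega> i) k}"

text \<open>N*: number of non-best arms i with s_i = 0 and max over l \<noteq> i of s_l = j.
  "Non-best" = some other arm has strictly larger mean (ties have probability 0).\<close>
definition Nstar :: "nat \<Rightarrow> nat \<Rightarrow> (nat \<Rightarrow> real \<times> (nat \<Rightarrow> bool)) \<Rightarrow> nat" where
  "Nstar n j \<omega> = card {i \<in> {..<n}.
      (\<exists>l<n. fst (\<omega> l) > fst (\<omega> i)) \<and> succ j \<omega> i = 0 \<and>
      Max {succ j \<omega> l | l. l < n \<and> l \<noteq> i} = j}"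

definition Dconst :: "nat \<Rightarrow> nat \<Rightarrow> real" where
  "Dconst n j = (\<integral>u. (let w = u powr (1 / real n) in
      (1 - (1 - w) ^ (j + 1)) / (real (j + 1) * w) *
      (1 - (1 - w ^ j) * (1 - w ^ j / real (j + 1)) ^ (n - 2)))
     \<partial>(uniform_measure lborel {0<..<1::real}))"

end

theory Submission
  imports Defs
begin

text \<open>
  By linearity and symmetry, E[N*] is n times the probability that arm i is eliminated early.
  Conditionally on its mean p, arm i fails j times with probability (1 - p)^j, and the other
  n - 1 arms are independent of it. By inclusion-exclusion over the events "all their means are
  at most p" and "none of them succeeds j times", they eliminate arm i with probability
  1 - p^(n-1) - c(1)^(n-1) + c(p)^(n-1), where c(q) = q - q^(j+1)/(j+1) is the probability that
  an arm has mean at most q and does not succeed j times. Integrating against (1 - p)^j, an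
  integration by parts followed by the substitution u = w^n turns the result into (n - 1) D.
\<close>

lemma interval_integral_FTC_real:
  fixes f F :: "real \<Rightarrow> real"
  assumes "a \<le> b" "continuous_on {a..b} f" "\<And>x. (F has_real_derivative f x) (at x)"
  shows "(LBINT x=a..b. f x) = F b - F a"
  using assms
  by (intro interval_integral_FTC_finite)
     (auto simp: has_real_derivative_iff_has_vector_derivative[symmetric] intro: has_field_derivative_at_within)

lemma interval_integral_indicator_atMost:
  fixes f :: "real \<Rightarrow> real"
  assumes "0 \<le> q" "q \<le> 1"
  shows "(LBINT p=0..1. indicator {..q} p * f p) = (LBINT p=0..q. f p)"
  using assms
  by (simp add: interval_integral_Ioo set_lebesgue_integral_def)
     (rule integral_discrete_difference[where X="{q}"], auto split: split_indicator)

lemma integral_uniform_measure_Ioo_01: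
  fixes f :: "real \<Rightarrow> real"
  assumes [measurable]: "f \<in> borel_measurable borel"
  shows "(\<integral>u. f u \<partial>uniform_measure lborel {0<..<1}) = (LBINT u=0..1. f u)"
proof -
  have "uniform_measure lborel {0<..<1::real} = density lborel (\<lambda>u. ennreal (indicator {0<..<1} u))"
    unfolding uniform_measure_def by (simp add: divide_ennreal_def ennreal_indicator)
  then show ?thesis
    by (simp add: integral_density interval_integral_Ioo set_lebesgue_integral_def)
qed

lemma one_minus_power_one_minus: "1 - (1 - w) ^ (j + 1) = w * (\<Sum>i\<le>j. (1 - w) ^ i :: real)"
  using one_diff_power_eq[of "1 - w" "j + 1"] by (simp add: lessThan_Suc_atMost)

lemma interval_integral_root_substitution:
  fixes f :: "real \<Rightarrow> real"
  assumes "1 \<le> n" "continuous_on {0..1} f"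
  shows "(LBINT u=0..1. f (root n u)) = (LBINT w=0..1. real n * w ^ (n - 1) * f w)"
proof -
  have cont: "continuous_on {0..1} (\<lambda>u. f (root n u))"
    using assms
    by (intro continuous_on_compose2[OF assms(2)] continuous_intros) (auto simp: real_root_ge_zero)
  have "(LBINT w=ereal 0..ereal 1. (real n * w ^ (n - 1)) *\<^sub>R f (root n (w ^ n))) =
      (LBINT u=ereal (0 ^ n)..ereal (1 ^ n). f (root n u))"
    by (rule interval_integral_substitution_finite)
       (auto intro!: derivative_eq_intros continuous_intros power_le_one intro: continuous_on_subset[OF cont])
  also have "(LBINT w=ereal 0..ereal 1. (real n * w ^ (n - 1)) *\<^sub>R f (root n (w ^ n))) =
      (LBINT w=ereal 0..ereal 1. real n * w ^ (n - 1) * f w)"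
    using assms(1) by (intro interval_integral_cong) (auto simp: einterval_iff real_root_pos2)
  finally show ?thesis
    using assms(1) by (simp add: zero_ereal_def one_ereal_def power_0_left)
qed

lemma measure_PiM_PiE_power:
  assumes "prob_space M" "finite J" "S \<in> sets M"
  shows "measure (PiM J (\<lambda>_. M)) (PiE J (\<lambda>_. S)) = measure M S ^ card J"
proof -
  interpret product_prob_space "\<lambda>_. M" J
    using assms(1) by (rule product_prob_spaceI)
  show ?thesis
    using measure_PiM_emb[of J "\<lambda>_. S"] assms(2,3)
    by (simp add: prod_emb_PiE_same_index sets.sets_into_space)
qed

lemma sets_bern_obs [measurable_cong]: "sets (bern_obs j p) = sets (obs_space j)"
  unfolding bern_obs_def obs_space_def by (intro sets_PiM_cong) auto

lemma space_bern_obs: "space (bern_obs j p) = space (obs_space j)"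
  using sets_bern_obs by (rule sets_eq_imp_space_eq)

lemma space_obs_space: "space (obs_space j) = PiE {..<j} (\<lambda>_. UNIV)"
  unfolding obs_space_def by (simp add: space_PiM)

lemma prob_space_bern_obs: "prob_space (bern_obs j p)"
  unfolding bern_obs_def by (intro prob_space_PiM) (simp add: prob_space_measure_pmf)

lemma emeasure_bern_obs_PiE:
  "emeasure (bern_obs j p) (PiE {..<j} A) = (\<Prod>k<j. ennreal (measure_pmf.prob (bernoulli_pmf p) (A k)))"
proof -
  interpret product_prob_space "\<lambda>_. measure_pmf (bernoulli_pmf p)" UNIV
    by unfold_locales
  show ?thesis
    unfolding bern_obs_def by (subst emeasure_PiM) (auto simp: measure_pmf.emeasure_eq_measure)
qed

lemma singleton_eq_PiE_obs:
  "x \<in> space (obs_space j) \<Longrightarrow> {x} = PiE {..<j} (\<lambda>k. {x k})"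
  unfolding space_obs_space by (auto simp: PiE_iff extensional_def)

lemma sets_singleton_obs: "x \<in> space (obs_space j) \<Longrightarrow> {x} \<in> sets (obs_space j)"
  by (subst singleton_eq_PiE_obs) (auto simp: obs_space_def intro!: sets_PiM_I_finite)

lemma measurable_bern_obs: "bern_obs j \<in> borel \<rightarrow>\<^sub>M subprob_algebra (obs_space j)"
proof (rule measurable_subprob_algebra)
  fix p
  show "subprob_space (bern_obs j p)"
    using prob_space_bern_obs prob_space_imp_subprob_space by blast
  show "sets (bern_obs j p) = sets (obs_space j)"
    by (rule sets_bern_obs)
next
  \<comment> \<open>the observation space is finite, so every event is a finite sum of point masses, each a
    polynomial in the success probability clipped to [0, 1]\<close>
  fix A assume A: "A \<in> sets (obs_space j)"
  then have A_space: "A \<subseteq> space (obs_space j)"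
    by (rule sets.sets_into_space)
  have "finite A"
    using A_space unfolding space_obs_space by (rule finite_subset) (intro finite_PiE, auto)
  have "emeasure (bern_obs j p) A = (\<Sum>x\<in>A. \<Prod>k<j. ennreal (pmf (bernoulli_pmf p) (x k)))" for p
  proof -
    have "emeasure (bern_obs j p) A = (\<Sum>x\<in>A. emeasure (bern_obs j p) {x})"
      using \<open>finite A\<close> A_space
      by (intro emeasure_eq_sum_singleton) (auto simp: sets_bern_obs sets_singleton_obs)
    also have "\<dots> = (\<Sum>x\<in>A. \<Prod>k<j. ennreal (pmf (bernoulli_pmf p) (x k)))"
      using A_space by (intro sum.cong refl)
        (auto simp: singleton_eq_PiE_obs emeasure_bern_obs_PiE measure_pmf_single)
    finally show ?thesis .
  qed
  then show "(\<lambda>p. emeasure (bern_obs j p) A) \<in> borel_measurable borel"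
    by (simp add: bernoulli_pmf.rep_eq)
qed

definition all_succ :: "nat \<Rightarrow> (nat \<Rightarrow> bool) set" where
  "all_succ j = {x \<in> space (obs_space j). \<forall>k<j. x k}"

definition all_fail :: "nat \<Rightarrow> (nat \<Rightarrow> bool) set" where
  "all_fail j = {x \<in> space (obs_space j). \<forall>k<j. \<not> x k}"

lemma all_succ_eq_PiE: "all_succ j = PiE {..<j} (\<lambda>_. {True})"
  unfolding all_succ_def space_obs_space by (auto simp: PiE_iff extensional_def fun_eq_iff)

lemma all_fail_eq_PiE: "all_fail j = PiE {..<j} (\<lambda>_. {False})"
  unfolding all_fail_def space_obs_space by (auto simp: PiE_iff extensional_def fun_eq_iff)

lemma sets_all_succ [measurable]: "all_succ j \<in> sets (obs_space j)"
  unfolding all_succ_eq_PiE obs_space_def by (rule sets_PiM_I_finite) auto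

lemma sets_all_fail [measurable]: "all_fail j \<in> sets (obs_space j)"
  unfolding all_fail_eq_PiE obs_space_def by (rule sets_PiM_I_finite) auto

lemma measure_bern_obs_constant:
  "measure (bern_obs j p) (PiE {..<j} (\<lambda>_. {b})) = pmf (bernoulli_pmf p) b ^ j"
  unfolding measure_def
  by (subst emeasure_bern_obs_PiE) (simp add: measure_pmf_single prod_ennreal ennreal_power)

lemma measure_bern_obs_all_fail:
  "0 \<le> p \<Longrightarrow> p \<le> 1 \<Longrightarrow> measure (bern_obs j p) (all_fail j) = (1 - p) ^ j"
  unfolding all_fail_eq_PiE measure_bern_obs_constant by simp

lemma measure_bern_obs_not_all_succ:
  assumes "0 \<le> p" "p \<le> 1"
  shows "measure (bern_obs j p) (space (obs_space j) - all_succ j) = 1 - p ^ j"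
proof -
  interpret prob_space "bern_obs j p"
    by (rule prob_space_bern_obs)
  have "prob (all_succ j) = p ^ j"
    unfolding all_succ_eq_PiE measure_bern_obs_constant using assms by simp
  then show ?thesis
    using prob_compl[of "all_succ j"] by (simp add: space_bern_obs sets_bern_obs)
qed

definition arm_kernel :: "nat \<Rightarrow> real \<Rightarrow> (real \<times> (nat \<Rightarrow> bool)) measure" where
  "arm_kernel j p = distr (bern_obs j p) (borel \<Otimes>\<^sub>M obs_space j) (\<lambda>x. (p, x))"

lemma arm_law_eq_bind: "arm_law j = uniform_measure lborel {0<..<1} \<bind> arm_kernel j"
  unfolding arm_law_def arm_kernel_def ..

lemma measurable_arm_kernel:
  "arm_kernel j \<in> uniform_measure lborel {0<..<1} \<rightarrow>\<^sub>M subprob_algebra (borel \<Otimes>\<^sub>M obs_space j)"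
proof -
  have "arm_kernel j \<in> borel \<rightarrow>\<^sub>M subprob_algebra (borel \<Otimes>\<^sub>M obs_space j)"
    unfolding arm_kernel_def by (rule measurable_distr2[OF _ measurable_bern_obs]) simp
  then show ?thesis
    by (simp cong: measurable_cong_sets)
qed

lemma sets_arm_law [measurable_cong]: "sets (arm_law j) = sets (borel \<Otimes>\<^sub>M obs_space j)"
  unfolding arm_law_eq_bind by (rule sets_bind_measurable[OF measurable_arm_kernel]) simp

lemma space_arm_law: "space (arm_law j) = UNIV \<times> space (obs_space j)"
  using sets_eq_imp_space_eq[OF sets_arm_law] by (simp add: space_pair_measure)

lemma prob_space_arm_law: "prob_space (arm_law j)"
proof -
  interpret prob_space "uniform_measure lborel {0<..<1::real}"
    by (intro prob_space_uniform_measure) auto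
  show ?thesis
    unfolding arm_law_eq_bind
  proof (rule prob_space_bind[OF _ measurable_arm_kernel])
    show "AE p in uniform_measure lborel {0<..<1}. prob_space (arm_kernel j p)"
      unfolding arm_kernel_def
      by (intro AE_I2 prob_space.prob_space_distr prob_space_bern_obs) measurable
  qed
qed

lemma nn_integral_arm_law:
  assumes [measurable]: "f \<in> borel_measurable (borel \<Otimes>\<^sub>M obs_space j)"
  shows "(\<integral>\<^sup>+y. f y \<partial>arm_law j) =
    (\<integral>\<^sup>+p. indicator {0<..<1} p * (\<integral>\<^sup>+x. f (p, x) \<partial>bern_obs j p) \<partial>lborel)"
proof -
  have "(\<integral>\<^sup>+y. f y \<partial>arm_law j) = (\<integral>\<^sup>+p. \<integral>\<^sup>+y. f y \<partial>arm_kernel j p \<partial>uniform_measure lborel {0<..<1})"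
    unfolding arm_law_eq_bind by (rule nn_integral_bind[OF _ measurable_arm_kernel]) simp
  also have "\<dots> = (\<integral>\<^sup>+p. (\<integral>\<^sup>+x. f (p, x) \<partial>bern_obs j p) \<partial>uniform_measure lborel {0<..<1})"
    unfolding arm_kernel_def
    by (intro nn_integral_cong nn_integral_distr) (simp_all cong: measurable_cong_sets)
  also have "\<dots> = (\<integral>\<^sup>+p. indicator {0<..<1} p * (\<integral>\<^sup>+x. f (p, x) \<partial>bern_obs j p) \<partial>lborel)"
  proof -
    have "(\<lambda>p. \<integral>\<^sup>+x. f (p, x) \<partial>bern_obs j p) \<in> borel_measurable borel"
      by (rule nn_integral_measurable_subprob_algebra2[OF _ measurable_bern_obs]) simp
    then show ?thesis
      by (subst nn_integral_uniform_measure) (auto simp: divide_ennreal_def mult.commute)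
  qed
  finally show ?thesis .
qed

lemma integral_arm_law_fst_snd:
  fixes g :: "real \<Rightarrow> real"
  assumes [measurable]: "g \<in> borel_measurable borel" "T \<in> sets (obs_space j)"
    and g_nonneg: "\<And>p. 0 \<le> g p"
  shows "(\<integral>y. g (fst y) * indicator T (snd y) \<partial>arm_law j) =
    (LBINT p=0..1. g p * measure (bern_obs j p) T)"
proof -
  have [measurable]: "(\<lambda>p. measure (bern_obs j p) T) \<in> borel_measurable borel"
    by (rule measure_measurable_subprob_algebra2[OF _ measurable_bern_obs]) simp
  have "(\<integral>\<^sup>+y. g (fst y) * indicator T (snd y) \<partial>arm_law j) =
      (\<integral>\<^sup>+p. indicator {0<..<1} p * (g p * measure (bern_obs j p) T) \<partial>lborel)"
  proof (subst nn_integral_arm_law, measurable, intro nn_integral_cong)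
    fix p
    interpret prob_space "bern_obs j p"
      by (rule prob_space_bern_obs)
    have "(\<integral>\<^sup>+x. ennreal (g p * indicator T x) \<partial>bern_obs j p) = ennreal (g p) * emeasure (bern_obs j p) T"
      using g_nonneg
      by (subst nn_integral_cmult_indicator[symmetric])
         (auto simp: sets_bern_obs ennreal_mult intro!: nn_integral_cong split: split_indicator)
    then show "indicator {0<..<1} p * (\<integral>\<^sup>+x. ennreal (g (fst (p, x)) * indicator T (snd (p, x))) \<partial>bern_obs j p) =
        ennreal (indicator {0<..<1} p * (g p * measure (bern_obs j p) T))"
      using g_nonneg by (auto simp: emeasure_eq_measure ennreal_mult split: split_indicator)
  qed
  then show ?thesis
    using g_nonneg
    by (subst interval_integral_Ioo)
       (auto simp: set_lebesgue_integral_def integral_eq_nn_integral)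
qed

lemma measure_arm_law_Times:
  assumes [measurable]: "A \<in> sets borel" "T \<in> sets (obs_space j)"
  shows "measure (arm_law j) (A \<times> T) = (LBINT p=0..1. indicator A p * measure (bern_obs j p) T)"
proof -
  interpret prob_space "arm_law j"
    by (rule prob_space_arm_law)
  have "measure (arm_law j) (A \<times> T) = (\<integral>y. indicator (A \<times> T) y \<partial>arm_law j)"
    by (simp add: emeasure_eq_measure)
  also have "\<dots> = (\<integral>y. indicator A (fst y) * indicator T (snd y) \<partial>arm_law j)"
    by (simp add: indicator_times)
  finally show ?thesis
    by (simp add: integral_arm_law_fst_snd)
qed

lemma measure_arm_law_atMost_Times:
  assumes "T \<in> sets (obs_space j)" "0 \<le> q" "q \<le> 1"
  shows "measure (arm_law j) ({..q} \<times> T) = (LBINT p=0..q. measure (bern_obs j p) T)"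
  using assms by (simp add: measure_arm_law_Times interval_integral_indicator_atMost)

lemma measure_arm_law_mean_atMost:
  assumes "0 \<le> q" "q \<le> 1"
  shows "measure (arm_law j) ({..q} \<times> space (obs_space j)) = q"
proof -
  have "measure (bern_obs j p) (space (obs_space j)) = 1" for p
    using prob_space.prob_space[OF prob_space_bern_obs] by (simp add: space_bern_obs)
  then show ?thesis
    using assms by (simp add: measure_arm_law_atMost_Times zero_ereal_def)
qed

definition cdf_not_all_succ :: "nat \<Rightarrow> real \<Rightarrow> real" where
  "cdf_not_all_succ j q = q - q ^ (j + 1) / (j + 1)"

lemma cdf_not_all_succ_has_real_derivative:
  "(cdf_not_all_succ j has_real_derivative 1 - q ^ j) (at q)"
  unfolding cdf_not_all_succ_def by (auto intro!: derivative_eq_intros simp del: power_Suc)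

lemma measure_arm_law_mean_atMost_not_all_succ:
  assumes "0 \<le> q" "q \<le> 1"
  shows "measure (arm_law j) ({..q} \<times> (space (obs_space j) - all_succ j)) = cdf_not_all_succ j q"
proof -
  have "measure (arm_law j) ({..q} \<times> (space (obs_space j) - all_succ j)) =
      (LBINT p=0..q. measure (bern_obs j p) (space (obs_space j) - all_succ j))"
    using assms by (simp add: measure_arm_law_atMost_Times)
  also have "\<dots> = (LBINT p=0..q. 1 - p ^ j)"
    using assms
    by (intro interval_integral_cong) (auto simp: einterval_iff measure_bern_obs_not_all_succ)
  also have "\<dots> = cdf_not_all_succ j q - cdf_not_all_succ j 0"
    using assms interval_integral_FTC_real[of 0 q "\<lambda>p. 1 - p ^ j" "cdf_not_all_succ j"]
    by (simp add: continuous_intros cdf_not_all_succ_has_real_derivative zero_ereal_def)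
  finally show ?thesis
    by (simp add: cdf_not_all_succ_def)
qed

lemma measure_arm_law_not_all_succ:
  "measure (arm_law j) (UNIV \<times> (space (obs_space j) - all_succ j)) = cdf_not_all_succ j 1"
proof -
  let ?T = "space (obs_space j) - all_succ j"
  have "measure (arm_law j) (UNIV \<times> ?T) = (LBINT p=0..1. measure (bern_obs j p) ?T)"
    by (simp add: measure_arm_law_Times)
  also have "\<dots> = (LBINT p=0..1. indicator {..1} p * measure (bern_obs j p) ?T)"
    by (intro interval_integral_cong) (auto simp: einterval_iff)
  also have "\<dots> = measure (arm_law j) ({..1} \<times> ?T)"
    by (simp add: measure_arm_law_Times)
  finally show ?thesis
    using measure_arm_law_mean_atMost_not_all_succ[of 1 j] by simp
qed

definition eliminating_rivals :: "nat \<Rightarrow> nat set \<Rightarrow> real \<Rightarrow> (nat \<Rightarrow> real \<times> (nat \<Rightarrow> bool)) set" where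
  "eliminating_rivals j J q = {y \<in> space (PiM J (\<lambda>_. arm_law j)).
     (\<exists>l\<in>J. q < fst (y l)) \<and> (\<exists>l\<in>J. snd (y l) \<in> all_succ j)}"

definition elimination_prob :: "nat \<Rightarrow> nat \<Rightarrow> real \<Rightarrow> real" where
  "elimination_prob m j q = 1 - q ^ m - cdf_not_all_succ j 1 ^ m + cdf_not_all_succ j q ^ m"

lemma sets_eliminating_rivals [measurable]:
  "eliminating_rivals j J q \<in> sets (PiM J (\<lambda>_. arm_law j))"
  unfolding eliminating_rivals_def by measurable

lemma eliminating_rivals_antimono: "q \<le> q' \<Longrightarrow> eliminating_rivals j J q' \<subseteq> eliminating_rivals j J q"
  unfolding eliminating_rivals_def by (auto intro: le_less_trans)

lemma compl_eliminating_rivals: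
  "space (PiM J (\<lambda>_. arm_law j)) - eliminating_rivals j J q =
    PiE J (\<lambda>_. {..q} \<times> space (obs_space j)) \<union> PiE J (\<lambda>_. UNIV \<times> (space (obs_space j) - all_succ j))"
  unfolding eliminating_rivals_def space_PiM space_arm_law
  by (auto simp: PiE_iff mem_Times_iff) (meson not_le)+

lemma prob_eliminating_rivals:
  assumes "finite J" "0 \<le> q" "q \<le> 1"
  shows "measure (PiM J (\<lambda>_. arm_law j)) (eliminating_rivals j J q) = elimination_prob (card J) j q"
proof -
  let ?P = "PiM J (\<lambda>_. arm_law j)"
  let ?S = "{..q} \<times> space (obs_space j)"
  let ?T = "UNIV \<times> (space (obs_space j) - all_succ j)"
  interpret prob_space ?P
    by (intro prob_space_PiM prob_space_arm_law)
  have [measurable]: "PiE J (\<lambda>_. ?S) \<in> sets ?P" "PiE J (\<lambda>_. ?T) \<in> sets ?P"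
    using assms(1) by (auto intro!: sets_PiM_I_finite)
  have "PiE J (\<lambda>_. ?S) \<inter> PiE J (\<lambda>_. ?T) = PiE J (\<lambda>_. ?S \<inter> ?T)"
    by (auto simp: PiE_iff)
  moreover have "?S \<inter> ?T = {..q} \<times> (space (obs_space j) - all_succ j)"
    by auto
  ultimately have "prob (PiE J (\<lambda>_. ?S) \<inter> PiE J (\<lambda>_. ?T)) = cdf_not_all_succ j q ^ card J"
    using assms by (simp add: measure_PiM_PiE_power prob_space_arm_law measure_arm_law_mean_atMost_not_all_succ)
  moreover have "prob (eliminating_rivals j J q) = 1 - prob (PiE J (\<lambda>_. ?S) \<union> PiE J (\<lambda>_. ?T))"
    using prob_compl[of "eliminating_rivals j J q"] by (simp add: compl_eliminating_rivals)
  ultimately show ?thesis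
    using assms
    by (simp add: measure_Un3 fmeasurable_eq_sets measure_PiM_PiE_power prob_space_arm_law
        measure_arm_law_mean_atMost measure_arm_law_not_all_succ elimination_prob_def)
qed

lemma borel_measurable_prob_eliminating_rivals:
  "(\<lambda>q. measure (PiM J (\<lambda>_. arm_law j)) (eliminating_rivals j J q)) \<in> borel_measurable borel"
proof -
  interpret prob_space "PiM J (\<lambda>_. arm_law j)"
    by (intro prob_space_PiM prob_space_arm_law)
  have "mono (\<lambda>q. - prob (eliminating_rivals j J q))"
    by (intro monoI le_imp_neg_le finite_measure_mono eliminating_rivals_antimono) simp_all
  then show ?thesis
    using borel_measurable_mono by fastforce
qed

definition early_eliminated :: "nat \<Rightarrow> nat \<Rightarrow> nat \<Rightarrow> (nat \<Rightarrow> real \<times> (nat \<Rightarrow> bool)) set" where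
  "early_eliminated n j i = {\<omega> \<in> space (bandit_law n j).
     (\<exists>l\<in>{..<n}. fst (\<omega> i) < fst (\<omega> l)) \<and> snd (\<omega> i) \<in> all_fail j \<and>
     (\<exists>l\<in>{..<n} - {i}. snd (\<omega> l) \<in> all_succ j)}"

lemma sets_early_eliminated [measurable]: "i < n \<Longrightarrow> early_eliminated n j i \<in> sets (bandit_law n j)"
  unfolding early_eliminated_def bandit_law_def by measurable

lemma succ_le: "succ j \<omega> l \<le> j"
  using card_mono[of "{..<j}" "{k \<in> {..<j}. snd (\<omega> l) k}"] by (auto simp: succ_def)

lemma succ_eq_0_iff: "succ j \<omega> l = 0 \<longleftrightarrow> (\<forall>k<j. \<not> snd (\<omega> l) k)"
  unfolding succ_def by auto

lemma succ_eq_iff: "succ j \<omega> l = j \<longleftrightarrow> (\<forall>k<j. snd (\<omega> l) k)"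
proof
  assume "succ j \<omega> l = j"
  then have "{k \<in> {..<j}. snd (\<omega> l) k} = {..<j}"
    unfolding succ_def by (intro card_subset_eq) auto
  then show "\<forall>k<j. snd (\<omega> l) k"
    by blast
next
  assume "\<forall>k<j. snd (\<omega> l) k"
  then have "{k \<in> {..<j}. snd (\<omega> l) k} = {..<j}"
    by blast
  then show "succ j \<omega> l = j"
    by (simp add: succ_def)
qed

lemma Max_succ_eq_iff:
  assumes "2 \<le> n" "i < n"
  shows "Max {succ j \<omega> l | l. l < n \<and> l \<noteq> i} = j \<longleftrightarrow> (\<exists>l<n. l \<noteq> i \<and> succ j \<omega> l = j)"
proof -
  have "(if i = 0 then 1 else 0) \<in> {l. l < n \<and> l \<noteq> i}"
    using assms by auto
  then have "{succ j \<omega> l | l. l < n \<and> l \<noteq> i} \<noteq> {}"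
    by blast
  then show ?thesis
    by (subst Max_eq_iff) (auto simp: succ_le intro: sym)
qed

lemma Nstar_eq_sum_indicator:
  assumes "2 \<le> n" "\<omega> \<in> space (bandit_law n j)"
  shows "real (Nstar n j \<omega>) = (\<Sum>i<n. indicator (early_eliminated n j i) \<omega>)"
proof -
  have obs: "snd (\<omega> l) \<in> space (obs_space j)" if "l < n" for l
  proof -
    have "\<omega> l \<in> space (arm_law j)"
      using assms(2) that unfolding bandit_law_def space_PiM by (simp add: PiE_iff)
    then show ?thesis
      by (simp add: space_arm_law mem_Times_iff)
  qed
  have "(\<exists>l<n. fst (\<omega> l) > fst (\<omega> i)) \<and> succ j \<omega> i = 0 \<and> Max {succ j \<omega> l | l. l < n \<and> l \<noteq> i} = j
      \<longleftrightarrow> \<omega> \<in> early_eliminated n j i" if "i < n" for i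
    using assms that unfolding early_eliminated_def
    by (simp add: succ_eq_0_iff succ_eq_iff Max_succ_eq_iff all_fail_def all_succ_def obs) blast
  then have "{i \<in> {..<n}. (\<exists>l<n. fst (\<omega> l) > fst (\<omega> i)) \<and> succ j \<omega> i = 0 \<and>
      Max {succ j \<omega> l | l. l < n \<and> l \<noteq> i} = j} = {..<n} \<inter> {i. \<omega> \<in> early_eliminated n j i}"
    by auto
  then show ?thesis
    unfolding Nstar_def by (simp add: indicator_def)
qed

lemma indicator_early_eliminated_merge:
  fixes n i :: nat and x y :: "nat \<Rightarrow> real \<times> (nat \<Rightarrow> bool)"
  defines "J \<equiv> {..<n} - {i}"
  assumes "i < n" "x \<in> space (PiM {i} (\<lambda>_. arm_law j))" "y \<in> space (PiM J (\<lambda>_. arm_law j))"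
  shows "indicator (early_eliminated n j i) (merge {i} J (x, y)) =
    indicator (all_fail j) (snd (x i)) * (indicator (eliminating_rivals j J (fst (x i))) y :: real)"
proof -
  let ?\<omega> = "merge {i} J (x, y)"
  have "{i} \<union> J = {..<n}"
    using assms(2) by (auto simp: J_def)
  then have "?\<omega> \<in> space (bandit_law n j)"
    using measurable_space[OF measurable_merge, of "(x, y)" "{i}" "\<lambda>_. arm_law j" J] assms(3,4)
    by (simp add: bandit_law_def space_pair_measure)
  moreover have "?\<omega> i = x i" "\<And>l. l \<in> J \<Longrightarrow> ?\<omega> l = y l"
    by (auto simp: merge_def J_def)
  moreover have "(\<exists>l\<in>{..<n}. fst (x i) < fst (?\<omega> l)) \<longleftrightarrow> (\<exists>l\<in>J. fst (x i) < fst (y l))"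
    by (auto simp: merge_def J_def)
  moreover have "(\<exists>l\<in>{..<n} - {i}. snd (?\<omega> l) \<in> all_succ j) \<longleftrightarrow> (\<exists>l\<in>J. snd (y l) \<in> all_succ j)"
    by (auto simp: merge_def J_def)
  ultimately show ?thesis
    using assms(4)
    by (auto simp: early_eliminated_def eliminating_rivals_def split: split_indicator)
qed

lemma measure_early_eliminated_eq_integral:
  assumes "i < n"
  shows "measure (bandit_law n j) (early_eliminated n j i) =
    (\<integral>a. measure (PiM ({..<n} - {i}) (\<lambda>_. arm_law j)) (eliminating_rivals j ({..<n} - {i}) (fst a)) *
      indicator (all_fail j) (snd a) \<partial>arm_law j)"
proof -
  define J where "J = {..<n} - {i}"
  define g where "g q = measure (PiM J (\<lambda>_. arm_law j)) (eliminating_rivals j J q)" for q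
  interpret product_prob_space "\<lambda>_. arm_law j"
    by (intro product_prob_spaceI prob_space_arm_law)
  interpret bandit: prob_space "bandit_law n j"
    unfolding bandit_law_def by (intro prob_space_PiM prob_space_arm_law)
  have [measurable]: "g \<in> borel_measurable borel"
    unfolding g_def by (rule borel_measurable_prob_eliminating_rivals)
  have n_eq: "{..<n} = {i} \<union> J"
    using assms by (auto simp: J_def)
  have "integrable (bandit_law n j) (indicator (early_eliminated n j i) :: _ \<Rightarrow> real)"
    using assms by (intro integrable_real_indicator) (simp_all add: bandit.emeasure_finite less_top[symmetric])
  then have integrable:
    "integrable (PiM ({i} \<union> J) (\<lambda>_. arm_law j)) (indicator (early_eliminated n j i) :: _ \<Rightarrow> real)"
    unfolding bandit_law_def n_eq .
  moreover have "early_eliminated n j i \<subseteq> space (bandit_law n j)"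
    by (auto simp: early_eliminated_def)
  ultimately have "measure (bandit_law n j) (early_eliminated n j i) =
      (\<integral>\<omega>. indicator (early_eliminated n j i) \<omega> \<partial>PiM ({i} \<union> J) (\<lambda>_. arm_law j))"
    by (simp add: bandit_law_def n_eq Int_absorb2)
  also have "\<dots> = (\<integral>x. (\<integral>y. indicator (early_eliminated n j i) (merge {i} J (x, y))
      \<partial>PiM J (\<lambda>_. arm_law j)) \<partial>PiM {i} (\<lambda>_. arm_law j))"
    using integrable by (intro product_integral_fold) (auto simp: J_def)
  also have "\<dots> = (\<integral>x. g (fst (x i)) * indicator (all_fail j) (snd (x i)) \<partial>PiM {i} (\<lambda>_. arm_law j))"
  proof (intro Bochner_Integration.integral_cong refl)
    fix x assume x: "x \<in> space (PiM {i} (\<lambda>_. arm_law j))"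
    have "(\<integral>y. indicator (early_eliminated n j i) (merge {i} J (x, y)) \<partial>PiM J (\<lambda>_. arm_law j)) =
        (\<integral>y. indicator (all_fail j) (snd (x i)) * indicator (eliminating_rivals j J (fst (x i))) y
          \<partial>PiM J (\<lambda>_. arm_law j) :: real)"
      unfolding J_def
      by (rule Bochner_Integration.integral_cong[OF refl]) (rule indicator_early_eliminated_merge[OF assms x])
    then show "(\<integral>y. indicator (early_eliminated n j i) (merge {i} J (x, y)) \<partial>PiM J (\<lambda>_. arm_law j)) =
        g (fst (x i)) * indicator (all_fail j) (snd (x i))"
      by (simp add: g_def sets.Int_space_eq2[OF sets_eliminating_rivals])
  qed
  also have "\<dots> = (\<integral>a. g (fst a) * indicator (all_fail j) (snd a) \<partial>arm_law j)"
    by (rule product_integral_singleton) simp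
  finally show ?thesis
    by (simp add: g_def J_def)
qed

lemma measure_early_eliminated:
  assumes "i < n"
  shows "measure (bandit_law n j) (early_eliminated n j i) =
    (LBINT p=0..1. (1 - p) ^ j * elimination_prob (n - 1) j p)"
proof -
  define J where "J = {..<n} - {i}"
  define g where "g q = measure (PiM J (\<lambda>_. arm_law j)) (eliminating_rivals j J q)" for q
  have "measure (bandit_law n j) (early_eliminated n j i) =
      (\<integral>a. g (fst a) * indicator (all_fail j) (snd a) \<partial>arm_law j)"
    using measure_early_eliminated_eq_integral[OF assms] by (simp add: g_def J_def)
  also have "\<dots> = (LBINT p=0..1. g p * measure (bern_obs j p) (all_fail j))"
    unfolding g_def by (rule integral_arm_law_fst_snd) (simp_all add: borel_measurable_prob_eliminating_rivals)
  also have "\<dots> = (LBINT p=0..1. (1 - p) ^ j * elimination_prob (n - 1) j p)"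
    using assms
    by (intro interval_integral_cong)
       (auto simp: einterval_iff g_def J_def prob_eliminating_rivals measure_bern_obs_all_fail)
  finally show ?thesis .
qed

definition cdf_all_fail :: "nat \<Rightarrow> real \<Rightarrow> real" where
  "cdf_all_fail j w = (1 - (1 - w) ^ (j + 1)) / (j + 1)"

lemma cdf_all_fail_has_real_derivative: "(cdf_all_fail j has_real_derivative (1 - w) ^ j) (at w)"
  unfolding cdf_all_fail_def by (auto intro!: derivative_eq_intros simp del: power_Suc)

lemma cdf_not_all_succ_eq_mult: "cdf_not_all_succ j w = w * (1 - w ^ j / (j + 1))"
  unfolding cdf_not_all_succ_def by (simp add: algebra_simps)

lemma integral_elimination_prob:
  "(LBINT w=0..1. (1 - w) ^ j * elimination_prob (m + 1) j w) =
   real (m + 1) * (LBINT w=0..1. w ^ m * cdf_all_fail j w * (1 - (1 - w ^ j) * (1 - w ^ j / (j + 1)) ^ m))"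
proof -
  define a where "a w = (1 - w) ^ j * elimination_prob (m + 1) j w" for w
  define b where
    "b w = real (m + 1) * (w ^ m * cdf_all_fail j w * (1 - (1 - w ^ j) * (1 - w ^ j / (j + 1)) ^ m))" for w
  \<comment> \<open>integration by parts, with cdf_all_fail as antiderivative of (1 - w) ^ j\<close>
  define M where "M w = - (1 - cdf_not_all_succ j 1 ^ (m + 1)) * ((1 - w) ^ (j + 1) / (j + 1))
      - cdf_all_fail j w * (w ^ (m + 1) - cdf_not_all_succ j w ^ (m + 1))" for w
  have cont_a: "continuous_on {0..1} a" and cont_b: "continuous_on {0..1} b"
    unfolding a_def b_def elimination_prob_def cdf_not_all_succ_def cdf_all_fail_def
    by (auto intro!: continuous_intros)
  have deriv: "(M has_real_derivative a w - b w) (at w)" for w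
  proof -
    have "(M has_real_derivative (1 - cdf_not_all_succ j 1 ^ (m + 1)) * (1 - w) ^ j -
        ((1 - w) ^ j * (w ^ (m + 1) - cdf_not_all_succ j w ^ (m + 1)) + cdf_all_fail j w *
         (real (m + 1) * w ^ m - real (m + 1) * cdf_not_all_succ j w ^ m * (1 - w ^ j)))) (at w)"
      unfolding M_def
      by (auto intro!: derivative_eq_intros cdf_all_fail_has_real_derivative
          cdf_not_all_succ_has_real_derivative simp del: power_Suc) (simp add: algebra_simps)
    moreover have "cdf_not_all_succ j w ^ m = w ^ m * (1 - w ^ j / (j + 1)) ^ m"
      by (simp add: cdf_not_all_succ_eq_mult power_mult_distrib)
    ultimately show ?thesis
      by (simp add: a_def b_def elimination_prob_def algebra_simps)
  qed
  have integrable: "interval_lebesgue_integrable lborel 0 1 a" "interval_lebesgue_integrable lborel 0 1 b"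
    using interval_integrable_continuous_on[of 0 1] cont_a cont_b by (simp_all add: zero_ereal_def one_ereal_def)
  have "(LBINT w=0..1. a w) - (LBINT w=0..1. b w) = (LBINT w=0..1. a w - b w)"
    using integrable by (rule interval_lebesgue_integral_diff(2)[symmetric])
  also have "\<dots> = M 1 - M 0"
    using interval_integral_FTC_real[of 0 1 "\<lambda>w. a w - b w" M] cont_a cont_b deriv
    by (simp add: continuous_on_diff zero_ereal_def one_ereal_def)
  also have "\<dots> = 0"
    by (simp add: M_def cdf_all_fail_def field_simps)
  finally show ?thesis
    by (simp add: a_def b_def)
qed

lemma Dconst_eq_integral:
  assumes "2 \<le> n"
  shows "Dconst n j =
    real n * (LBINT w=0..1. w ^ (n - 2) * cdf_all_fail j w * (1 - (1 - w ^ j) * (1 - w ^ j / (j + 1)) ^ (n - 2)))"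
proof -
  define Q where "Q w = 1 - (1 - w ^ j) * (1 - w ^ j / (j + 1)) ^ (n - 2)" for w
  \<comment> \<open>written as a polynomial, the factor (1 - (1 - w) ^ (j + 1)) / w is continuous at 0,
    as the substitution rule requires\<close>
  define R where "R w = (\<Sum>i\<le>j. (1 - w) ^ i) / (j + 1) * Q w" for w
  have "Dconst n j = (LBINT u=0..1. (let w = u powr (1 / real n) in
      (1 - (1 - w) ^ (j + 1)) / (real (j + 1) * w) * Q w))"
    unfolding Dconst_def Q_def by (rule integral_uniform_measure_Ioo_01) (simp add: Let_def)
  also have "\<dots> = (LBINT u=0..1. R (root n u))"
  proof (intro interval_integral_cong)
    fix u assume "u \<in> einterval (min 0 1) (max 0 1)"
    then have "u powr (1 / real n) = root n u" "0 < root n u"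
      using assms by (simp_all add: einterval_iff root_powr_inverse)
    then show "(let w = u powr (1 / real n) in (1 - (1 - w) ^ (j + 1)) / (real (j + 1) * w) * Q w) =
        R (root n u)"
      unfolding Let_def one_minus_power_one_minus by (simp add: R_def)
  qed
  also have "\<dots> = (LBINT w=0..1. real n * w ^ (n - 1) * R w)"
    using assms unfolding R_def Q_def
    by (intro interval_integral_root_substitution) (auto intro!: continuous_intros)
  also have "\<dots> = (LBINT w=0..1. real n * (w ^ (n - 2) * cdf_all_fail j w * Q w))"
  proof (intro interval_integral_cong)
    have "n - 1 = Suc (n - 2)"
      using assms by arith
    then show "real n * w ^ (n - 1) * R w = real n * (w ^ (n - 2) * cdf_all_fail j w * Q w)" for w
      unfolding cdf_all_fail_def one_minus_power_one_minus by (simp add: R_def)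
  qed
  finally show ?thesis
    by (simp add: Q_def)
qed

lemma integral_Nstar_eq_sum:
  assumes "2 \<le> n"
  shows "(\<integral>\<omega>. real (Nstar n j \<omega>) \<partial>bandit_law n j) = (\<Sum>i<n. measure (bandit_law n j) (early_eliminated n j i))"
proof -
  interpret prob_space "bandit_law n j"
    unfolding bandit_law_def by (intro prob_space_PiM prob_space_arm_law)
  have "(\<integral>\<omega>. real (Nstar n j \<omega>) \<partial>bandit_law n j) = (\<integral>\<omega>. (\<Sum>i<n. indicator (early_eliminated n j i) \<omega>) \<partial>bandit_law n j)"
    using assms by (intro Bochner_Integration.integral_cong refl Nstar_eq_sum_indicator)
  also have "\<dots> = (\<Sum>i<n. measure (bandit_law n j) (early_eliminated n j i))"
    by (simp add: emeasure_eq_measure sets.Int_space_eq2)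
  finally show ?thesis .
qed

theorem mainTheorem11:
  fixes n j :: nat
  assumes "n \<ge> 2" and "j \<ge> 1"
  shows "(\<integral>\<omega>. real (Nstar n j \<omega>) \<partial>(bandit_law n j)) = real (n - 1) * Dconst n j"
proof -
  obtain m where n: "n = m + 2"
    using assms(1) by (metis add.commute le_Suc_ex)
  have "(\<integral>\<omega>. real (Nstar n j \<omega>) \<partial>(bandit_law n j)) =
      real n * (LBINT p=0..1. (1 - p) ^ j * elimination_prob (m + 1) j p)"
    using assms(1) by (simp add: integral_Nstar_eq_sum measure_early_eliminated n)
  also have "\<dots> = real (n - 1) * Dconst n j"
    unfolding integral_elimination_prob by (simp add: Dconst_eq_integral n)
  finally show ?thesis .
qed

end
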